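(* Let $\ell_1,\ell_2,\dots\in\mathbb R^A$ be arbitrary non-negative loss vectors, and let $\pi_1,\pi_2,\dots$ be the FTRL iterates defined in the context. Suppose $0<\alpha_1\le1$, $\eta_1=\eta_2(1-\alpha_1)$, and for all $k\ge2$, $0<\alpha_k<1$ and $0<\eta_{k+1}(1-\alpha_k)\le\eta_k$. Define $\widehat\eta_1=\eta_2$ and $\widehat\eta_k=\eta_k/(1-\alpha_k)$ for $k>1$. Then for every $n\ge1$, $$R_n\le\frac53\sum_{k=1}^n\alpha_k^n\widehat\eta_k\alpha_k\mathsf{Var}_{\pi_k}(\ell_k)+\frac{\log A}{\eta_{n+1}}+3\sum_{k=1}^n\alpha_k^n\widehat\eta_k^2\alpha_k^2\|\ell_k\|_\infty^3\,\mathbb 1\Big(\widehat\eta_k\alpha_k\|\ell_k\|_\infty>\tfrac13\Big).$$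
   Context: Online weighted linear optimization over $\mathcal A=\{1,\dots,A\}$: given $\{\alpha_k\}\subset(0,1]$, let $\alpha_i^k=\alpha_i\prod_{j=i+1}^k(1-\alpha_j)$ for $i<k$, $\alpha_k^k=\alpha_k$. Define $L_0=0$ and $L_k=(1-\alpha_k)L_{k-1}+\alpha_k\ell_k=\sum_{i=1}^k\alpha_i^k\ell_i$. FTRL with negative-entropy regularizer and learning rates $\eta_k>0$: $\pi_k(a)=\exp(-\eta_kL_{k-1}(a))/\sum_{a'}\exp(-\eta_kL_{k-1}(a'))$ for $k\ge1$ (equivalently $\pi_{k}=\arg\min_{\pi\in\Delta(\mathcal A)}\{\langle\pi,L_{k-1}\rangle+\eta_k^{-1}\sum_a\pi(a)\log\pi(a)\}$; $\pi_1$ is uniform). Regret: $R_n=\max_{a\in\mathcal A}\big\{\sum_{k=1}^n\alpha_k^n\langle\pi_k,\ell_k\rangle-\sum_{k=1}^n\alpha_k^n\ell_k(a)\big\}$. For $\pi\in\Delta(\mathcal A)$, $\mathbb E_\pi[\ell]=\sum_a\pi(a)\ell(a)$ and $\mathsf{Var}_\pi(\ell)=\sum_a\pi(a)(\ell(a)-\mathbb E_\pi[\ell])^2$. *)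

theory Defs
  imports Complex_Main
begin

text \<open>Actions are 1..A. Sequences alpha, eta, ell are indexed by k = 1, 2, ...
  (the value at index 0 is irrelevant).  ell k a is the loss of action a at round k.\<close>

definition actions :: "nat \<Rightarrow> nat set" where
  "actions A = {1..A}"

definition wgt :: "(nat \<Rightarrow> real) \<Rightarrow> nat \<Rightarrow> nat \<Rightarrow> real" where
  "wgt \<alpha> i k = \<alpha> i * (\<Prod>j\<in>{i+1..k}. 1 - \<alpha> j)"

fun Lcum :: "(nat \<Rightarrow> real) \<Rightarrow> (nat \<Rightarrow> nat \<Rightarrow> real) \<Rightarrow> nat \<Rightarrow> nat \<Rightarrow> real" where
  "Lcum \<alpha> l 0 a = 0"
| "Lcum \<alpha> l (Suc k) a = (1 - \<alpha> (Suc k)) * Lcum \<alpha> l k a + \<alpha> (Suc k) * l (Suc k) a"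

definition ftrl :: "nat \<Rightarrow> (nat \<Rightarrow> real) \<Rightarrow> (nat \<Rightarrow> real) \<Rightarrow> (nat \<Rightarrow> nat \<Rightarrow> real) \<Rightarrow> nat \<Rightarrow> nat \<Rightarrow> real" where
  "ftrl A \<eta> \<alpha> l k a =
     exp (- \<eta> k * Lcum \<alpha> l (k - 1) a) /
     (\<Sum>a'\<in>actions A. exp (- \<eta> k * Lcum \<alpha> l (k - 1) a'))"

definition expect :: "nat \<Rightarrow> (nat \<Rightarrow> real) \<Rightarrow> (nat \<Rightarrow> real) \<Rightarrow> real" where
  "expect A \<pi> l = (\<Sum>a\<in>actions A. \<pi> a * l a)"

definition var :: "nat \<Rightarrow> (nat \<Rightarrow> real) \<Rightarrow> (nat \<Rightarrow> real) \<Rightarrow> real" where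
  "var A \<pi> l = (\<Sum>a\<in>actions A. \<pi> a * (l a - expect A \<pi> l)\<^sup>2)"

definition supnorm :: "nat \<Rightarrow> (nat \<Rightarrow> real) \<Rightarrow> real" where
  "supnorm A l = Max ((\<lambda>a. \<bar>l a\<bar>) ` actions A)"

definition regret :: "nat \<Rightarrow> (nat \<Rightarrow> real) \<Rightarrow> (nat \<Rightarrow> real) \<Rightarrow> (nat \<Rightarrow> nat \<Rightarrow> real) \<Rightarrow> nat \<Rightarrow> real" where
  "regret A \<eta> \<alpha> l n = Max ((\<lambda>a. (\<Sum>k=1..n. wgt \<alpha> k n * expect A (ftrl A \<eta> \<alpha> l k) (l k))
                                   - (\<Sum>k=1..n. wgt \<alpha> k n * l k a)) ` actions A)"

definition eta_hat :: "(nat \<Rightarrow> real) \<Rightarrow> (nat \<Rightarrow> real) \<Rightarrow> nat \<Rightarrow> real" where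
  "eta_hat \<eta> \<alpha> k = (if k = 1 then \<eta> 2 else \<eta> k / (1 - \<alpha> k))"

end

(*
  Undo the discounting. With P_k = prod_{2<=j<=k} (1 - alpha_j) one has
  L_k = P_k * sum_{i<=k} (alpha_i / P_i) l_i and alpha_k^n = P_n * alpha_k / P_k, so pi_k is the
  exponential-weights iterate for the raw losses x_i = (alpha_i / P_i) l_i with learning rate
  gamma_k = eta_k P_{k-1}, which the hypothesis on eta makes nonincreasing, and R_n is P_n times
  the raw regret. The usual potential argument bounds the raw regret by ln A / gamma_{n+1} plus the
  per-round gaps between <pi_k, x_k> and the mix loss -ln <pi_k, exp (-gamma_k x_k)> / gamma_k.
  By exp t <= 1 + t + t^2 for t <= 1, a gap is at most gamma_k Var_{pi_k}(x_k) when
  gamma_k |x_k|_inf <= 1, and at most |x_k|_inf otherwise. Multiplying back by P_n turns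
  gamma_k alpha_k / P_k into eta_hat_k alpha_k.
*)

theory Submission
  imports Defs "HOL-Analysis.Convex"
begin

lemma exp_le_quadratic:
  fixes t :: real
  assumes "t \<le> 1"
  shows "exp t \<le> 1 + t + t\<^sup>2"
proof (cases "t \<ge> 0")
  case True
  then show ?thesis using exp_bound assms by auto
next
  case False
  have "exp t * (1 - t) \<le> exp t * exp (- t)"
    using exp_ge_add_one_self[of "- t"] by (simp add: mult_left_mono)
  also have "\<dots> = 1" by (simp add: exp_minus)
  also have "\<dots> \<le> (1 + t + t\<^sup>2) * (1 - t)"
    using False mult_nonneg_nonpos[of "t * t" t] by (simp add: algebra_simps power2_eq_square)
  finally show ?thesis using False by (simp add: mult_le_cancel_right)
qed

text \<open>Jensen's inequality for the concave map \<open>t \<mapsto> t powr p\<close>, written with \<open>exp\<close> and \<open>ln\<close>.\<close>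

lemma sum_exp_mult_le:
  fixes u :: "'a \<Rightarrow> real"
  assumes "finite S" "S \<noteq> {}" "0 \<le> p" "p \<le> 1"
  shows "(\<Sum>a\<in>S. exp (p * u a)) \<le> card S * exp (p * ln ((\<Sum>a\<in>S. exp (u a)) / card S))"
proof -
  define N where "N = real (card S)"
  define m where "m = (\<Sum>a\<in>S. exp (u a)) / N"
  have N_pos: "N > 0" using assms by (simp add: N_def card_gt_0_iff)
  have m_pos: "m > 0" using assms N_pos by (simp add: m_def sum_pos)
  have "(\<Sum>a\<in>S. exp (p * u a)) \<le> (\<Sum>a\<in>S. exp (p * ln m) * (p * (exp (u a) / m) + (1 - p)))"
  proof (rule sum_mono)
    fix a
    have "exp (p * u a) = exp (p * ln m) * exp (p * (u a - ln m))"
      by (simp add: exp_add[symmetric] algebra_simps)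
    also have "\<dots> \<le> exp (p * ln m) * (p * exp (u a - ln m) + (1 - p))"
      using convex_onD[OF exp_convex, of p 0 "u a - ln m"] assms by (simp add: mult_left_mono)
    finally show "exp (p * u a) \<le> exp (p * ln m) * (p * (exp (u a) / m) + (1 - p))"
      using m_pos by (simp add: exp_diff)
  qed
  also have "\<dots> = exp (p * ln m) * (\<Sum>a\<in>S. p * (exp (u a) / m) + (1 - p))"
    by (simp add: sum_distrib_left)
  also have "(\<Sum>a\<in>S. p * (exp (u a) / m) + (1 - p)) = p * ((\<Sum>a\<in>S. exp (u a)) / m) + (1 - p) * N"
    by (simp add: sum.distrib N_def flip: sum_distrib_left sum_divide_distrib)
  also have "(\<Sum>a\<in>S. exp (u a)) / m = N"
    using m_pos N_pos by (auto simp: m_def)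
  also have "exp (p * ln m) * (p * N + (1 - p) * N) = N * exp (p * ln m)"
    by (simp add: algebra_simps)
  finally show ?thesis by (simp add: N_def m_def)
qed

lemma sum_mult_exp_pos:
  fixes \<pi> f :: "'a \<Rightarrow> real"
  assumes "finite S" "\<And>a. a \<in> S \<Longrightarrow> \<pi> a \<ge> 0" "(\<Sum>a\<in>S. \<pi> a) = 1"
  shows "(\<Sum>a\<in>S. \<pi> a * exp (f a)) > 0"
proof -
  obtain a0 where "a0 \<in> S" "\<pi> a0 \<noteq> 0"
    using assms(3) by (metis sum.neutral zero_neq_one)
  then show ?thesis
    using assms(1,2) by (intro sum_pos2[of S a0]) (auto simp: order.strict_iff_order)
qed

lemma mean_add_ln_mean_exp_neg_le_variance:
  fixes S :: "'a set" and \<pi> Y :: "'a \<Rightarrow> real"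
  defines "\<mu> \<equiv> (\<Sum>a\<in>S. \<pi> a * Y a)"
  assumes "finite S" and \<pi>_nonneg: "\<And>a. a \<in> S \<Longrightarrow> \<pi> a \<ge> 0" and \<pi>_sum: "(\<Sum>a\<in>S. \<pi> a) = 1"
    and Y_ge: "\<And>a. a \<in> S \<Longrightarrow> \<mu> - 1 \<le> Y a"
  shows "\<mu> + ln (\<Sum>a\<in>S. \<pi> a * exp (- Y a)) \<le> (\<Sum>a\<in>S. \<pi> a * (Y a - \<mu>)\<^sup>2)"
proof -
  define V where "V = (\<Sum>a\<in>S. \<pi> a * (Y a - \<mu>)\<^sup>2)"
  have V_nonneg: "V \<ge> 0" unfolding V_def by (intro sum_nonneg) (simp add: \<pi>_nonneg)
  have Z_pos: "(\<Sum>a\<in>S. \<pi> a * exp (- Y a)) > 0"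
    using sum_mult_exp_pos[OF \<open>finite S\<close> \<pi>_nonneg \<pi>_sum] .
  have "(\<Sum>a\<in>S. \<pi> a * exp (- Y a)) \<le> (\<Sum>a\<in>S. \<pi> a * (exp (- \<mu>) * (1 + (\<mu> - Y a) + (\<mu> - Y a)\<^sup>2)))"
  proof (intro sum_mono mult_left_mono)
    fix a assume "a \<in> S"
    have "exp (- Y a) = exp (- \<mu>) * exp (\<mu> - Y a)" by (simp flip: exp_add)
    also have "\<dots> \<le> exp (- \<mu>) * (1 + (\<mu> - Y a) + (\<mu> - Y a)\<^sup>2)"
      using exp_le_quadratic[of "\<mu> - Y a"] Y_ge[OF \<open>a \<in> S\<close>] by simp
    finally show "exp (- Y a) \<le> exp (- \<mu>) * (1 + (\<mu> - Y a) + (\<mu> - Y a)\<^sup>2)" .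
  qed (simp add: \<pi>_nonneg)
  also have "\<dots> = (\<Sum>a\<in>S. exp (- \<mu>) * (\<pi> a * (1 + \<mu>) - \<pi> a * Y a + \<pi> a * (Y a - \<mu>)\<^sup>2))"
    by (rule sum.cong) (simp_all add: algebra_simps power2_eq_square)
  also have "\<dots> = exp (- \<mu>) * ((\<Sum>a\<in>S. \<pi> a) * (1 + \<mu>) - (\<Sum>a\<in>S. \<pi> a * Y a) + V)"
    by (simp add: V_def sum_subtractf sum.distrib flip: sum_distrib_left sum_distrib_right)
  also have "\<dots> = exp (- \<mu>) * (1 + V)"
    by (simp add: \<pi>_sum \<mu>_def)
  finally have "ln (\<Sum>a\<in>S. \<pi> a * exp (- Y a)) \<le> ln (exp (- \<mu>) * (1 + V))"
    using Z_pos by simp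
  also have "\<dots> \<le> - \<mu> + V"
    using V_nonneg ln_add_one_self_le_self[of V] by (simp add: ln_mult)
  finally show ?thesis by (simp add: V_def)
qed

text \<open>The proof gives the sharper bound \<open>V + M\<^sup>3 [M > 1]\<close>; the constants are those of the theorem.\<close>

lemma mean_add_ln_mean_exp_neg_le:
  fixes S :: "'a set" and \<pi> Y :: "'a \<Rightarrow> real"
  assumes "finite S" and \<pi>_nonneg: "\<And>a. a \<in> S \<Longrightarrow> \<pi> a \<ge> 0" and \<pi>_sum: "(\<Sum>a\<in>S. \<pi> a) = 1"
    and Y_bounds: "\<And>a. a \<in> S \<Longrightarrow> 0 \<le> Y a \<and> Y a \<le> M"
  shows "(\<Sum>a\<in>S. \<pi> a * Y a) + ln (\<Sum>a\<in>S. \<pi> a * exp (- Y a))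
     \<le> 5/3 * (\<Sum>a\<in>S. \<pi> a * (Y a - (\<Sum>b\<in>S. \<pi> b * Y b))\<^sup>2) + 3 * M^3 * (if M > 1/3 then 1 else 0)"
proof -
  define \<mu> where "\<mu> = (\<Sum>a\<in>S. \<pi> a * Y a)"
  define V where "V = (\<Sum>a\<in>S. \<pi> a * (Y a - \<mu>)\<^sup>2)"
  have "S \<noteq> {}" using \<pi>_sum by auto
  then have M_nonneg: "M \<ge> 0" using Y_bounds by fastforce
  have V_nonneg: "V \<ge> 0" unfolding V_def by (intro sum_nonneg) (simp add: \<pi>_nonneg)
  have "\<mu> \<le> (\<Sum>a\<in>S. \<pi> a * M)"
    unfolding \<mu>_def by (intro sum_mono mult_left_mono) (simp_all add: \<pi>_nonneg Y_bounds)
  then have \<mu>_le: "\<mu> \<le> M" by (simp add: \<pi>_sum flip: sum_distrib_right)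
  show ?thesis
  proof (cases "M \<le> 1")
    case True
    then have "\<mu> + ln (\<Sum>a\<in>S. \<pi> a * exp (- Y a)) \<le> V"
      unfolding \<mu>_def V_def using \<mu>_le Y_bounds
      by (intro mean_add_ln_mean_exp_neg_le_variance[OF \<open>finite S\<close> \<pi>_nonneg \<pi>_sum])
        (fastforce simp: \<mu>_def)+
    moreover have "0 \<le> 3 * M^3 * (if M > 1/3 then 1 else 0 :: real)" using M_nonneg by simp
    ultimately show ?thesis using V_nonneg unfolding \<mu>_def V_def by linarith
  next
    case False
    have "(\<Sum>a\<in>S. \<pi> a * exp (- Y a)) \<le> (\<Sum>a\<in>S. \<pi> a)"
      by (intro sum_mono mult_right_le_one_le) (simp_all add: \<pi>_nonneg Y_bounds)
    moreover have "(\<Sum>a\<in>S. \<pi> a * exp (- Y a)) > 0"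
      using sum_mult_exp_pos[OF \<open>finite S\<close> \<pi>_nonneg \<pi>_sum] .
    ultimately have "ln (\<Sum>a\<in>S. \<pi> a * exp (- Y a)) \<le> 0" using \<pi>_sum by simp
    moreover have "M \<le> M ^ 3"
      using False less_1_mult[of M M] mult_left_mono[of 1 "M * M" M] by (simp add: power3_eq_cube)
    ultimately show ?thesis using \<mu>_le False V_nonneg unfolding \<mu>_def V_def by simp
  qed
qed

section \<open>Exponential weights with nonincreasing learning rates\<close>

definition gibbs :: "'a set \<Rightarrow> real \<Rightarrow> ('a \<Rightarrow> real) \<Rightarrow> 'a \<Rightarrow> real" where
  "gibbs S \<eta> L a = exp (- \<eta> * L a) / (\<Sum>b\<in>S. exp (- \<eta> * L b))"

lemma gibbs_pos: "finite S \<Longrightarrow> S \<noteq> {} \<Longrightarrow> gibbs S \<eta> L a > 0"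
  by (simp add: gibbs_def sum_pos)

lemma sum_gibbs: "finite S \<Longrightarrow> S \<noteq> {} \<Longrightarrow> (\<Sum>a\<in>S. gibbs S \<eta> L a) = 1"
  using sum_pos[of S "\<lambda>b. exp (- \<eta> * L b)"] by (simp add: gibbs_def flip: sum_divide_distrib)

definition exp_potential :: "'a set \<Rightarrow> real \<Rightarrow> ('a \<Rightarrow> real) \<Rightarrow> real" where
  "exp_potential S \<eta> L = (ln (card S) - ln (\<Sum>a\<in>S. exp (- \<eta> * L a))) / \<eta>"

definition mix_loss :: "'a set \<Rightarrow> ('a \<Rightarrow> real) \<Rightarrow> real \<Rightarrow> ('a \<Rightarrow> real) \<Rightarrow> real" where
  "mix_loss S \<pi> \<eta> x = - ln (\<Sum>a\<in>S. \<pi> a * exp (- \<eta> * x a)) / \<eta>"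

lemma exp_potential_zero: "exp_potential S \<eta> (\<lambda>_. 0) = 0"
  by (simp add: exp_potential_def)

lemma exp_potential_le:
  assumes "finite S" "a \<in> S" "\<eta> > 0"
  shows "exp_potential S \<eta> L \<le> L a + ln (card S) / \<eta>"
proof -
  have "exp (- \<eta> * L a) \<le> (\<Sum>b\<in>S. exp (- \<eta> * L b))"
    using assms by (intro member_le_sum) auto
  then have "- \<eta> * L a \<le> ln (\<Sum>b\<in>S. exp (- \<eta> * L b))"
    by (metis exp_gt_zero ln_exp ln_le_cancel_iff order_less_le_trans)
  then have "exp_potential S \<eta> L \<le> (\<eta> * L a + ln (card S)) / \<eta>"
    unfolding exp_potential_def using assms by (intro divide_right_mono) auto
  also have "\<dots> = L a + ln (card S) / \<eta>"
    using assms by (simp add: add_divide_distrib)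
  finally show ?thesis .
qed

lemma exp_potential_antimono:
  assumes "finite S" "S \<noteq> {}" "0 < \<eta>'" "\<eta>' \<le> \<eta>"
  shows "exp_potential S \<eta> L \<le> exp_potential S \<eta>' L"
proof -
  define N where "N = real (card S)"
  define Z where "Z = (\<Sum>a\<in>S. exp (- \<eta> * L a))"
  define p where "p = \<eta>' / \<eta>"
  have N_pos: "N > 0" and Z_pos: "Z > 0"
    using assms by (simp_all add: N_def Z_def card_gt_0_iff sum_pos)
  have p: "0 \<le> p" "p \<le> 1" "p * \<eta> = \<eta>'" using assms by (simp_all add: p_def)
  have "(\<Sum>a\<in>S. exp (- \<eta>' * L a)) \<le> N * exp (p * ln (Z / N))"
    using sum_exp_mult_le[OF assms(1,2) p(1,2), of "\<lambda>a. - \<eta> * L a"]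
    by (simp add: N_def Z_def flip: p(3) mult.assoc)
  then have "ln (\<Sum>a\<in>S. exp (- \<eta>' * L a)) \<le> ln (N * exp (p * ln (Z / N)))"
    using assms(1,2) N_pos by (simp add: sum_pos)
  also have "\<dots> = ln N + p * (ln Z - ln N)"
    using N_pos Z_pos by (simp add: ln_mult ln_div)
  finally have "p * (ln N - ln Z) \<le> ln N - ln (\<Sum>a\<in>S. exp (- \<eta>' * L a))"
    by (simp add: algebra_simps)
  then have "p * (ln N - ln Z) / \<eta>' \<le> (ln N - ln (\<Sum>a\<in>S. exp (- \<eta>' * L a))) / \<eta>'"
    using assms by (intro divide_right_mono) auto
  moreover have "p * (ln N - ln Z) / \<eta>' = (ln N - ln Z) / \<eta>"
    using assms by (simp add: p_def)
  ultimately show ?thesis by (simp add: exp_potential_def N_def Z_def)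
qed

lemma exp_potential_add:
  assumes "finite S" "S \<noteq> {}" "\<eta> > 0"
  shows "exp_potential S \<eta> (\<lambda>a. L a + x a) = exp_potential S \<eta> L + mix_loss S (gibbs S \<eta> L) \<eta> x"
proof -
  define Z where "Z = (\<Sum>b\<in>S. exp (- \<eta> * L b))"
  have Z_pos: "Z > 0" using assms by (simp add: Z_def sum_pos)
  have "(\<Sum>a\<in>S. exp (- \<eta> * (L a + x a))) = Z * (\<Sum>a\<in>S. gibbs S \<eta> L a * exp (- \<eta> * x a))"
    using Z_pos by (simp add: gibbs_def Z_def sum_distrib_left algebra_simps flip: exp_add)
  moreover have "(\<Sum>a\<in>S. gibbs S \<eta> L a * exp (- \<eta> * x a)) > 0"
    using assms by (intro sum_pos mult_pos_pos gibbs_pos) auto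
  ultimately show ?thesis
    using Z_pos by (simp add: exp_potential_def mix_loss_def Z_def ln_mult diff_divide_distrib add_divide_distrib)
qed

lemma sum_mix_loss_le:
  fixes x :: "nat \<Rightarrow> 'a \<Rightarrow> real" and \<eta> :: "nat \<Rightarrow> real"
  assumes "finite S" "S \<noteq> {}" "a \<in> S"
    and \<eta>_pos: "\<And>k. k \<ge> 1 \<Longrightarrow> \<eta> k > 0" and \<eta>_antimono: "\<And>k. k \<ge> 1 \<Longrightarrow> \<eta> (Suc k) \<le> \<eta> k"
  shows "(\<Sum>k=1..n. mix_loss S (gibbs S (\<eta> k) (\<lambda>b. \<Sum>i=1..<k. x i b)) (\<eta> k) (x k))
    \<le> (\<Sum>k=1..n. x k a) + ln (card S) / \<eta> (n + 1)"
proof -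
  have telescope: "(\<Sum>k=1..m. mix_loss S (gibbs S (\<eta> k) (\<lambda>b. \<Sum>i=1..<k. x i b)) (\<eta> k) (x k))
    \<le> exp_potential S (\<eta> (m + 1)) (\<lambda>b. \<Sum>i=1..m. x i b)" for m
  proof (induction m)
    case 0
    show ?case by (simp add: exp_potential_zero)
  next
    case (Suc m)
    have "(\<Sum>k=1..Suc m. mix_loss S (gibbs S (\<eta> k) (\<lambda>b. \<Sum>i=1..<k. x i b)) (\<eta> k) (x k))
      \<le> exp_potential S (\<eta> (Suc m)) (\<lambda>b. \<Sum>i=1..m. x i b)
        + mix_loss S (gibbs S (\<eta> (Suc m)) (\<lambda>b. \<Sum>i=1..m. x i b)) (\<eta> (Suc m)) (x (Suc m))"
      using Suc.IH by (simp add: atLeastLessThanSuc_atLeastAtMost)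
    also have "\<dots> = exp_potential S (\<eta> (Suc m)) (\<lambda>b. \<Sum>i=1..Suc m. x i b)"
      using exp_potential_add[OF assms(1,2) \<eta>_pos] by simp
    also have "\<dots> \<le> exp_potential S (\<eta> (Suc m + 1)) (\<lambda>b. \<Sum>i=1..Suc m. x i b)"
      using \<eta>_pos \<eta>_antimono by (intro exp_potential_antimono[OF assms(1,2)]) auto
    finally show ?case .
  qed
  show ?thesis
    using order_trans[OF telescope exp_potential_le[OF assms(1,3) \<eta>_pos]] by simp
qed

lemma mean_sub_mix_loss_le:
  fixes S :: "'a set" and \<pi> x :: "'a \<Rightarrow> real"
  assumes "finite S" "\<And>a. a \<in> S \<Longrightarrow> \<pi> a \<ge> 0" "(\<Sum>a\<in>S. \<pi> a) = 1" "\<eta> > 0"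
    and x_bounds: "\<And>a. a \<in> S \<Longrightarrow> 0 \<le> x a \<and> x a \<le> M"
  shows "(\<Sum>a\<in>S. \<pi> a * x a) - mix_loss S \<pi> \<eta> x
    \<le> 5/3 * \<eta> * (\<Sum>a\<in>S. \<pi> a * (x a - (\<Sum>b\<in>S. \<pi> b * x b))\<^sup>2)
      + 3 * \<eta>\<^sup>2 * M^3 * (if \<eta> * M > 1/3 then 1 else 0)"
proof -
  define \<mu> where "\<mu> = (\<Sum>a\<in>S. \<pi> a * x a)"
  define V where "V = (\<Sum>a\<in>S. \<pi> a * (x a - \<mu>)\<^sup>2)"
  define I :: real where "I = (if \<eta> * M > 1/3 then 1 else 0)"
  have "(\<Sum>a\<in>S. \<pi> a * (\<eta> * x a)) + ln (\<Sum>a\<in>S. \<pi> a * exp (- (\<eta> * x a)))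
    \<le> 5/3 * (\<Sum>a\<in>S. \<pi> a * (\<eta> * x a - (\<Sum>b\<in>S. \<pi> b * (\<eta> * x b)))\<^sup>2) + 3 * (\<eta> * M)^3 * I"
    unfolding I_def using assms
    by (intro mean_add_ln_mean_exp_neg_le) (auto intro: mult_left_mono)
  also have "(\<Sum>b\<in>S. \<pi> b * (\<eta> * x b)) = \<eta> * \<mu>"
    by (simp add: \<mu>_def sum_distrib_left algebra_simps)
  also have "(\<Sum>a\<in>S. \<pi> a * (\<eta> * x a - \<eta> * \<mu>)\<^sup>2) = \<eta>\<^sup>2 * V"
    unfolding V_def sum_distrib_left by (intro sum.cong) (simp_all add: power2_eq_square algebra_simps)
  finally have "\<eta> * \<mu> - \<eta> * mix_loss S \<pi> \<eta> x \<le> \<eta> * (5/3 * \<eta> * V + 3 * \<eta>\<^sup>2 * M^3 * I)"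
    using \<open>\<eta> > 0\<close> by (simp add: \<mu>_def mix_loss_def sum_distrib_left algebra_simps power3_eq_cube power2_eq_square)
  then show ?thesis
    using \<open>\<eta> > 0\<close> by (simp add: \<mu>_def V_def I_def flip: right_diff_distrib)
qed

lemma exp_weights_regret_le:
  fixes x :: "nat \<Rightarrow> nat \<Rightarrow> real" and \<pi> :: "nat \<Rightarrow> nat \<Rightarrow> real" and \<eta> M :: "nat \<Rightarrow> real"
  assumes "A \<ge> 1" "a \<in> actions A"
    and \<pi>_gibbs: "\<And>k. k \<ge> 1 \<Longrightarrow> \<pi> k = gibbs (actions A) (\<eta> k) (\<lambda>b. \<Sum>i=1..<k. x i b)"
    and \<eta>_pos: "\<And>k. k \<ge> 1 \<Longrightarrow> \<eta> k > 0" and \<eta>_antimono: "\<And>k. k \<ge> 1 \<Longrightarrow> \<eta> (Suc k) \<le> \<eta> k"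
    and x_bounds: "\<And>k b. k \<ge> 1 \<Longrightarrow> b \<in> actions A \<Longrightarrow> 0 \<le> x k b \<and> x k b \<le> M k"
  shows "(\<Sum>k=1..n. expect A (\<pi> k) (x k)) - (\<Sum>k=1..n. x k a)
    \<le> ln A / \<eta> (n + 1) + (\<Sum>k=1..n. 5/3 * \<eta> k * var A (\<pi> k) (x k)
          + 3 * (\<eta> k)\<^sup>2 * M k ^ 3 * (if \<eta> k * M k > 1/3 then 1 else 0))"
proof -
  have S: "finite (actions A)" "actions A \<noteq> {}" "card (actions A) = A"
    using \<open>A \<ge> 1\<close> by (auto simp: actions_def)
  have round: "expect A (\<pi> k) (x k) - mix_loss (actions A) (\<pi> k) (\<eta> k) (x k)
    \<le> 5/3 * \<eta> k * var A (\<pi> k) (x k) + 3 * (\<eta> k)\<^sup>2 * M k ^ 3 * (if \<eta> k * M k > 1/3 then 1 else 0)"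
    if "k \<ge> 1" for k
    unfolding var_def expect_def \<pi>_gibbs[OF that]
    using that S gibbs_pos[OF S(1,2)] sum_gibbs[OF S(1,2)] \<eta>_pos x_bounds
    by (intro mean_sub_mix_loss_le) (auto intro: less_imp_le)
  have "(\<Sum>k=1..n. mix_loss (actions A) (\<pi> k) (\<eta> k) (x k)) \<le> (\<Sum>k=1..n. x k a) + ln A / \<eta> (n + 1)"
    using sum_mix_loss_le[where S = "actions A" and a = a and x = x and \<eta> = \<eta> and n = n]
      S \<open>a \<in> actions A\<close> \<eta>_pos \<eta>_antimono
    by (simp add: \<pi>_gibbs)
  moreover have "(\<Sum>k=1..n. expect A (\<pi> k) (x k) - mix_loss (actions A) (\<pi> k) (\<eta> k) (x k))
    \<le> (\<Sum>k=1..n. 5/3 * \<eta> k * var A (\<pi> k) (x k)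
          + 3 * (\<eta> k)\<^sup>2 * M k ^ 3 * (if \<eta> k * M k > 1/3 then 1 else 0))"
    by (intro sum_mono round) simp
  ultimately show ?thesis by (simp add: sum_subtractf)
qed

section \<open>Undoing the discounting\<close>

lemma expect_scale: "expect A \<pi> (\<lambda>a. c * l a) = c * expect A \<pi> l"
  by (simp add: expect_def sum_distrib_left algebra_simps)

lemma var_scale: "var A \<pi> (\<lambda>a. c * l a) = c\<^sup>2 * var A \<pi> l"
  unfolding var_def expect_scale sum_distrib_left
  by (intro sum.cong) (simp_all add: power2_eq_square algebra_simps)

lemma le_supnorm: "a \<in> actions A \<Longrightarrow> l a \<le> supnorm A l"
  unfolding supnorm_def actions_def by (rule order_trans[OF abs_ge_self Max_ge]) auto

definition discount :: "(nat \<Rightarrow> real) \<Rightarrow> nat \<Rightarrow> real" where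
  "discount \<alpha> k = (\<Prod>j=2..k. 1 - \<alpha> j)"

definition raw_weight :: "(nat \<Rightarrow> real) \<Rightarrow> nat \<Rightarrow> real" where
  "raw_weight \<alpha> k = \<alpha> k / discount \<alpha> k"

text \<open>At \<open>k = 1\<close> the rate only multiplies \<open>L\<^sub>0 = 0\<close>; the value \<open>\<eta> 2\<close> matches \<open>eta_hat\<close> and keeps
  the rates nonincreasing.\<close>

definition raw_rate :: "(nat \<Rightarrow> real) \<Rightarrow> (nat \<Rightarrow> real) \<Rightarrow> nat \<Rightarrow> real" where
  "raw_rate \<eta> \<alpha> k = (if k = 1 then \<eta> 2 else \<eta> k * discount \<alpha> (k - 1))"

lemma discount_pos: "\<forall>j\<ge>2. \<alpha> j < 1 \<Longrightarrow> discount \<alpha> k > 0"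
  unfolding discount_def by (intro prod_pos) auto

lemma discount_Suc: "k \<ge> 1 \<Longrightarrow> discount \<alpha> (Suc k) = discount \<alpha> k * (1 - \<alpha> (Suc k))"
  unfolding discount_def by (subst prod.nat_ivl_Suc') auto

lemma wgt_eq_discount_mult_raw_weight:
  assumes "\<forall>j\<ge>2. \<alpha> j < 1" "1 \<le> k" "k \<le> n"
  shows "wgt \<alpha> k n = discount \<alpha> n * raw_weight \<alpha> k"
proof -
  have "discount \<alpha> n = discount \<alpha> k * (\<Prod>j=k+1..n. 1 - \<alpha> j)"
    unfolding discount_def using assms(2,3) by (subst prod.union_disjoint[symmetric]) (auto intro: prod.cong)
  then show ?thesis
    using discount_pos[of \<alpha> k] assms(1) by (simp add: wgt_def raw_weight_def)
qed

lemma Lcum_eq_discount_mult: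
  assumes "\<forall>j\<ge>2. \<alpha> j < 1"
  shows "Lcum \<alpha> l k a = discount \<alpha> k * (\<Sum>i=1..k. raw_weight \<alpha> i * l i a)"
proof (induction k)
  case 0
  show ?case by simp
next
  case (Suc k)
  have "discount \<alpha> (Suc k) * raw_weight \<alpha> (Suc k) = \<alpha> (Suc k)"
    using discount_pos[of \<alpha> "Suc k"] assms by (simp add: raw_weight_def)
  moreover have "discount \<alpha> (Suc k) * (\<Sum>i=1..k. raw_weight \<alpha> i * l i a) = (1 - \<alpha> (Suc k)) * Lcum \<alpha> l k a"
    using Suc.IH discount_Suc[of k \<alpha>] by (cases "k = 0") simp_all
  ultimately show ?case
    by (simp add: distrib_left flip: mult.assoc)
qed

lemma ftrl_eq_gibbs:
  assumes "\<forall>j\<ge>2. \<alpha> j < 1" "k \<ge> 1"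
  shows "ftrl A \<eta> \<alpha> l k = gibbs (actions A) (raw_rate \<eta> \<alpha> k) (\<lambda>a. \<Sum>i=1..<k. raw_weight \<alpha> i * l i a)"
proof (cases "k = 1")
  case True
  then show ?thesis by (simp add: ftrl_def gibbs_def fun_eq_iff)
next
  case False
  have "{1..<k} = {1..k - 1}" using assms(2) by auto
  then show ?thesis
    using False by (simp add: ftrl_def gibbs_def raw_rate_def Lcum_eq_discount_mult[OF assms(1)] fun_eq_iff mult.assoc)
qed

lemma raw_rate_pos:
  assumes "\<And>k. k \<ge> 2 \<Longrightarrow> \<eta> k > 0" "\<forall>j\<ge>2. \<alpha> j < 1" "k \<ge> 1"
  shows "raw_rate \<eta> \<alpha> k > 0"
  using assms discount_pos[of \<alpha> "k - 1"] by (simp add: raw_rate_def)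

lemma raw_rate_Suc: "k \<ge> 1 \<Longrightarrow> raw_rate \<eta> \<alpha> (Suc k) = \<eta> (Suc k) * discount \<alpha> k"
  by (simp add: raw_rate_def)

lemma raw_rate_antimono:
  assumes "\<forall>j\<ge>2. \<alpha> j < 1" "\<And>k. k \<ge> 2 \<Longrightarrow> \<eta> (k + 1) * (1 - \<alpha> k) \<le> \<eta> k" "k \<ge> 1"
  shows "raw_rate \<eta> \<alpha> (Suc k) \<le> raw_rate \<eta> \<alpha> k"
proof (cases "k = 1")
  case True
  then show ?thesis by (simp add: raw_rate_def discount_def numeral_2_eq_2)
next
  case False
  then have "raw_rate \<eta> \<alpha> (Suc k) = \<eta> (k + 1) * (1 - \<alpha> k) * discount \<alpha> (k - 1)"
    using assms(3) discount_Suc[of "k - 1" \<alpha>] by (simp add: raw_rate_def)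
  also have "\<dots> \<le> \<eta> k * discount \<alpha> (k - 1)"
    using False assms discount_pos[of \<alpha> "k - 1"] by (intro mult_right_mono) auto
  finally show ?thesis using False by (simp add: raw_rate_def)
qed

lemma raw_rate_mult_raw_weight:
  assumes "\<forall>j\<ge>2. \<alpha> j < 1" "k \<ge> 1"
  shows "raw_rate \<eta> \<alpha> k * raw_weight \<alpha> k = eta_hat \<eta> \<alpha> k * \<alpha> k"
proof (cases "k = 1")
  case True
  then show ?thesis by (simp add: raw_rate_def raw_weight_def eta_hat_def discount_def)
next
  case False
  then have "discount \<alpha> k = discount \<alpha> (k - 1) * (1 - \<alpha> k)"
    using assms(2) discount_Suc[of "k - 1" \<alpha>] by simp
  then show ?thesis
    using False assms discount_pos[of \<alpha> "k - 1"]
    by (simp add: raw_rate_def raw_weight_def eta_hat_def)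
qed

lemma raw_weight_nonneg:
  "\<forall>j\<ge>2. \<alpha> j < 1 \<Longrightarrow> \<alpha> k \<ge> 0 \<Longrightarrow> raw_weight \<alpha> k \<ge> 0"
  using discount_pos[of \<alpha> k] by (simp add: raw_weight_def)

lemma discounted_regret_eq:
  assumes "\<forall>j\<ge>2. \<alpha> j < 1"
  shows "(\<Sum>k=1..n. wgt \<alpha> k n * expect A (\<pi> k) (l k)) - (\<Sum>k=1..n. wgt \<alpha> k n * l k a)
    = discount \<alpha> n * ((\<Sum>k=1..n. expect A (\<pi> k) (\<lambda>b. raw_weight \<alpha> k * l k b))
                      - (\<Sum>k=1..n. raw_weight \<alpha> k * l k a))"
  using assms
  by (simp add: wgt_eq_discount_mult_raw_weight expect_scale sum_distrib_left right_diff_distrib mult.assoc)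

lemma discounted_bound_eq:
  assumes "\<forall>j\<ge>2. \<alpha> j < 1" "n \<ge> 1"
  shows "discount \<alpha> n * (ln A / raw_rate \<eta> \<alpha> (n + 1)
      + (\<Sum>k=1..n. 5/3 * raw_rate \<eta> \<alpha> k * var A (\<pi> k) (\<lambda>b. raw_weight \<alpha> k * l k b)
          + 3 * (raw_rate \<eta> \<alpha> k)\<^sup>2 * (raw_weight \<alpha> k * s k) ^ 3
            * (if raw_rate \<eta> \<alpha> k * (raw_weight \<alpha> k * s k) > 1/3 then 1 else 0)))
    = 5 / 3 * (\<Sum>k=1..n. wgt \<alpha> k n * eta_hat \<eta> \<alpha> k * \<alpha> k * var A (\<pi> k) (l k))
      + ln A / \<eta> (n + 1)
      + 3 * (\<Sum>k=1..n. wgt \<alpha> k n * (eta_hat \<eta> \<alpha> k)\<^sup>2 * (\<alpha> k)\<^sup>2 * s k ^ 3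
              * (if eta_hat \<eta> \<alpha> k * \<alpha> k * s k > 1 / 3 then 1 else 0))"
    (is "discount \<alpha> n * (_ + sum ?t _) = _")
proof -
  have round: "discount \<alpha> n * ?t k
    = 5 / 3 * (wgt \<alpha> k n * eta_hat \<eta> \<alpha> k * \<alpha> k * var A (\<pi> k) (l k))
      + 3 * (wgt \<alpha> k n * (eta_hat \<eta> \<alpha> k)\<^sup>2 * (\<alpha> k)\<^sup>2 * s k ^ 3
              * (if eta_hat \<eta> \<alpha> k * \<alpha> k * s k > 1 / 3 then 1 else 0))"
    if "k \<in> {1..n}" for k
  proof -
    have w: "wgt \<alpha> k n = discount \<alpha> n * raw_weight \<alpha> k"
      using that by (intro wgt_eq_discount_mult_raw_weight assms(1)) auto
    have c: "eta_hat \<eta> \<alpha> k * \<alpha> k = raw_rate \<eta> \<alpha> k * raw_weight \<alpha> k"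
      using that by (simp add: raw_rate_mult_raw_weight assms(1))
    show ?thesis
      unfolding w power_mult_distrib[symmetric] mult.assoc c
      by (simp add: var_scale power2_eq_square power3_eq_cube algebra_simps)
  qed
  have rate: "discount \<alpha> n * (ln A / raw_rate \<eta> \<alpha> (n + 1)) = ln A / \<eta> (n + 1)"
    using assms discount_pos[of \<alpha> n] by (simp add: raw_rate_Suc)
  have rounds: "(\<Sum>k=1..n. discount \<alpha> n * ?t k)
    = 5 / 3 * (\<Sum>k=1..n. wgt \<alpha> k n * eta_hat \<eta> \<alpha> k * \<alpha> k * var A (\<pi> k) (l k))
      + 3 * (\<Sum>k=1..n. wgt \<alpha> k n * (eta_hat \<eta> \<alpha> k)\<^sup>2 * (\<alpha> k)\<^sup>2 * s k ^ 3
              * (if eta_hat \<eta> \<alpha> k * \<alpha> k * s k > 1 / 3 then 1 else 0))"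
    by (subst sum.cong[OF refl round]) (simp_all only: sum.distrib sum_distrib_left)
  show ?thesis
    unfolding distrib_left[of "discount \<alpha> n" "ln A / raw_rate \<eta> \<alpha> (n + 1)"] sum_distrib_left[of "discount \<alpha> n"]
    using rate rounds by linarith
qed

theorem theorem2:
  fixes A :: nat and \<alpha> \<eta> :: "nat \<Rightarrow> real" and l :: "nat \<Rightarrow> nat \<Rightarrow> real" and n :: nat
  assumes A_pos: "A \<ge> 1"
    and loss_nonneg: "\<And>k a. k \<ge> 1 \<Longrightarrow> a \<in> actions A \<Longrightarrow> l k a \<ge> 0"
    and eta_pos: "\<And>k. k \<ge> 2 \<Longrightarrow> \<eta> k > 0"
    and alpha1: "0 < \<alpha> 1" "\<alpha> 1 \<le> 1"
    and eta1: "\<eta> 1 = \<eta> 2 * (1 - \<alpha> 1)"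
    and alphak: "\<And>k. k \<ge> 2 \<Longrightarrow> 0 < \<alpha> k \<and> \<alpha> k < 1"
    and etak: "\<And>k. k \<ge> 2 \<Longrightarrow> 0 < \<eta> (k + 1) * (1 - \<alpha> k) \<and> \<eta> (k + 1) * (1 - \<alpha> k) \<le> \<eta> k"
    and n_pos: "n \<ge> 1"
  shows "regret A \<eta> \<alpha> l n \<le>
     5 / 3 * (\<Sum>k=1..n. wgt \<alpha> k n * eta_hat \<eta> \<alpha> k * \<alpha> k * var A (ftrl A \<eta> \<alpha> l k) (l k))
     + ln (real A) / \<eta> (n + 1)
     + 3 * (\<Sum>k=1..n. wgt \<alpha> k n * (eta_hat \<eta> \<alpha> k)\<^sup>2 * (\<alpha> k)\<^sup>2 * (supnorm A (l k)) ^ 3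
              * (if eta_hat \<eta> \<alpha> k * \<alpha> k * supnorm A (l k) > 1 / 3 then 1 else 0))"
proof -
  have \<alpha>_lt: "\<forall>j\<ge>2. \<alpha> j < 1" using alphak by blast
  have \<alpha>_nonneg: "\<And>k. k \<ge> 1 \<Longrightarrow> \<alpha> k \<ge> 0"
    using alpha1 alphak by (metis le_antisym less_imp_le not_less_eq_eq One_nat_def Suc_1)
  have raw_regret: "(\<Sum>k=1..n. expect A (ftrl A \<eta> \<alpha> l k) (\<lambda>b. raw_weight \<alpha> k * l k b))
      - (\<Sum>k=1..n. raw_weight \<alpha> k * l k a)
    \<le> ln A / raw_rate \<eta> \<alpha> (n + 1)
      + (\<Sum>k=1..n. 5/3 * raw_rate \<eta> \<alpha> k * var A (ftrl A \<eta> \<alpha> l k) (\<lambda>b. raw_weight \<alpha> k * l k b)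
          + 3 * (raw_rate \<eta> \<alpha> k)\<^sup>2 * (raw_weight \<alpha> k * supnorm A (l k)) ^ 3
            * (if raw_rate \<eta> \<alpha> k * (raw_weight \<alpha> k * supnorm A (l k)) > 1/3 then 1 else 0))"
    if "a \<in> actions A" for a
  proof (rule exp_weights_regret_le)
    show "0 \<le> raw_weight \<alpha> k * l k b \<and> raw_weight \<alpha> k * l k b \<le> raw_weight \<alpha> k * supnorm A (l k)"
      if "k \<ge> 1" "b \<in> actions A" for k b
      using that loss_nonneg le_supnorm raw_weight_nonneg[OF \<alpha>_lt \<alpha>_nonneg] by (simp add: mult_left_mono)
  qed (use A_pos that \<alpha>_lt eta_pos etak in \<open>auto simp: ftrl_eq_gibbs raw_rate_pos raw_rate_antimono\<close>)
  show ?thesis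
    unfolding regret_def
    using A_pos mult_left_mono[OF raw_regret less_imp_le[OF discount_pos[OF \<alpha>_lt, of n]]]
    unfolding discounted_regret_eq[OF \<alpha>_lt] discounted_bound_eq[OF \<alpha>_lt n_pos]
    by (intro Max.boundedI) (auto simp: actions_def)
qed

end
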